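(* Let $I\in[0,1)$ and let $l\ge 1$ be an integer. For integers $m\ge -1$ and $n\in\{0,1,\dots,l\}$, let $Q(l,m,n)$ be the probability that the random walk started at $[m,n]^T$ (defined in the context) hits the line $\mathcal{L}_1=\{[m',n']^T : m'=-1\}$ before hitting the line $\mathcal{L}_2=\{[m',n']^T: n'=l\}$. Then $$Q(l,m,n)=\begin{cases}\sum_{i=0}^{l-n-1} a_{i,m}(1-I)^i I^{m+1+i}, & \text{if } m\ge 0,\ 0\le n<l,\\ 1, & \text{if } m=-1,\ 0\le n<l,\\ 0, & \text{if } m>0,\ n=l,\end{cases}$$ where the coefficients $a_{i,m}$ ($i\ge 0$, $m\ge 0$) are given by $$a_{i,m}=\begin{cases} 1, & i=0,\\ 1+m, & i=1,\\ C_i, & m=0,\\ C_{i+1}, & m=1,\\ C_{i+1}+\sum_{k=1}^{i-2} S_k\big(C_{i+1-k}\big)+S_{i-1}\big(1+j_{i-1}\big), & i>1 \text{ and } m>1.\end{cases}$$ Here $C_i=\frac{1}{i+1}\binom{2i}{i}=\frac{(2i)!}{(i+1)!\,i!}$ is the $i$-th Catalan number, and for $k\ge1$ and a summand $f$ (possibly depending on $j_k$), $S_k(f)$ denotes the nested sum $$S_k(f)=\sum_{j_1=3}^{m+1}\sum_{j_2=3}^{j_1+1}\cdots\sum_{j_k=3}^{j_{k-1}+1} f,$$ i.e. the sum over all integer tuples $(j_1,\dots,j_k)$ with $3\le j_1\le m+1$ and $3\le j_r\le j_{r-1}+1$ for $2\le r\le k$. (So, for instance, $S_1(C_i)=\sum_{j_1=3}^{m+1}C_i$,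 $S_2(C_{i-1})=\sum_{j_1=3}^{m+1}\sum_{j_2=3}^{j_1+1}C_{i-1}$, the last constant term is $S_{i-2}(C_3)$, and the final term is $S_{i-1}(1+j_{i-1})$.)
   Context: Fix $I\in[0,1)$. Let $\delta_1,\delta_2,\dots$ be i.i.d. random vectors in $\mathbb{Z}^2$ with $\delta_t=[-1,0]^T$ with probability $I$ and $\delta_t=[1,1]^T$ with probability $1-I$. For a starting point $[m,n]^T$ define $s_T=[m,n]^T+\sum_{t=1}^T\delta_t$ for $T\ge 0$ (so $s_0=[m,n]^T$). Let $\mathcal{L}_1=\{[m',n']^T: m'=-1\}$ and, for a positive integer $l$, $\mathcal{L}_2=\{[m',n']^T: n'=l\}$. The probability of hitting $\mathcal{L}_1$ before $\mathcal{L}_2$ is $$Q(l,m,n)=\sum_{T=0}^{\infty}\Pr\big(s_T\in\mathcal{L}_1,\ s_{T'}\notin\mathcal{L}_1\cup\mathcal{L}_2\ \forall\, T'<T\big).$$ (Interpretation: $m$ is the number of blocks by which an attacker's branch lags behind an honest branch, $n$ the number of blocks the honest branch has grown; each new block goes to the attacker with probability $I$, and the attacker wins if its branch surpasses the honest one before the honest branch has grown by $l$ blocks.) *)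

theory Defs
  imports Complex_Main
begin

text \<open>A step is encoded as a boolean: True = honest block, vector [1,1], probability 1-I;
  False = attacker block, vector [-1,0], probability I.\<close>

definition walk_pos :: "int \<Rightarrow> int \<Rightarrow> bool list \<Rightarrow> nat \<Rightarrow> int \<times> int" where
  "walk_pos m n xs k =
     (m + int (length (filter id (take k xs))) - int (length (filter Not (take k xs))),
      n + int (length (filter id (take k xs))))"

definition path_weight :: "real \<Rightarrow> bool list \<Rightarrow> real" where
  "path_weight I xs = prod_list (map (\<lambda>b. if b then 1 - I else I) xs)"

definition first_hit_L1 :: "nat \<Rightarrow> int \<Rightarrow> int \<Rightarrow> bool list \<Rightarrow> bool" where
  "first_hit_L1 l m n xs =
     (fst (walk_pos m n xs (length xs)) = -1 \<and>
      (\<forall>T'<length xs. fst (walk_pos m n xs T') \<noteq> -1 \<and> snd (walk_pos m n xs T') \<noteq> int l))"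

definition hit_prob :: "real \<Rightarrow> nat \<Rightarrow> int \<Rightarrow> int \<Rightarrow> nat \<Rightarrow> real" where
  "hit_prob I l m n T =
     (\<Sum>xs\<in>{xs :: bool list. length xs = T}. if first_hit_L1 l m n xs then path_weight I xs else 0)"

definition Q :: "real \<Rightarrow> nat \<Rightarrow> int \<Rightarrow> int \<Rightarrow> real" where
  "Q I l m n = (\<Sum>T. hit_prob I l m n T)"

definition catalan :: "nat \<Rightarrow> real" where
  "catalan i = real ((2 * i) choose i) / real (i + 1)"

definition idx_tuples :: "int \<Rightarrow> nat \<Rightarrow> int list set" where
  "idx_tuples m k = {js. length js = k \<and>
      (0 < k \<longrightarrow> 3 \<le> js ! 0 \<and> js ! 0 \<le> m + 1) \<and>
      (\<forall>r. 1 \<le> r \<and> r < k \<longrightarrow> 3 \<le> js ! r \<and> js ! r \<le> js ! (r - 1) + 1)}"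

definition nested_S :: "int \<Rightarrow> nat \<Rightarrow> (int \<Rightarrow> real) \<Rightarrow> real" where
  "nested_S m k f = (\<Sum>js\<in>idx_tuples m k. f (last js))"

definition coeff_a :: "nat \<Rightarrow> int \<Rightarrow> real" where
  "coeff_a i m =
     (if i = 0 then 1
      else if i = 1 then 1 + real_of_int m
      else if m = 0 then catalan i
      else if m = 1 then catalan (i + 1)
      else catalan (i + 1)
           + (\<Sum>k=1..i-2. nested_S m k (\<lambda>_. catalan (i + 1 - k)))
           + nested_S m (i - 1) (\<lambda>j. 1 + real_of_int j))"

end

theory Submission
  imports Defs
begin

text \<open>Conditioning on the first step shows that \<open>Q\<close> solves
  \<open>Q(m,n) = (1 - I) Q(m+1,n+1) + I Q(m-1,n)\<close> with boundary values 1 on \<open>m = -1\<close> and 0 on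
  \<open>n = l\<close>; since every path meets one of the two lines within \<open>m + 1 + 2(l - n)\<close> steps, the
  series defining \<open>Q\<close> is a finite sum and the recursion holds exactly.
  The ballot numbers \<open>b(i,k) = C(k+2i,i) - C(k+2i,i-1)\<close> obey the Pascal-type rule
  \<open>b(i+1,k+1) = b(i+1,k) + b(i,k+2)\<close>, which is exactly what makes
  \<open>\<Sum>i<l-n. b(i,m) (1-I)^i I^(m+1+i)\<close> solve the same recursion.
  The nested sums \<open>S_k\<close> telescope in \<open>m\<close> in the same way, so \<open>a(i,m)\<close> obeys the same rule
  and equals \<open>b(i,m)\<close>, the Catalan boundary values being \<open>b(i,0) = C_i\<close> and \<open>b(i,1) = C_(i+1)\<close>.
  All identities are polynomial in \<open>I\<close>.\<close>

lemma walk_pos_0 [simp]: "walk_pos m n xs 0 = (m, n)"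
  by (simp add: walk_pos_def)

lemma walk_pos_Cons_Suc [simp]:
  "walk_pos m n (b # xs) (Suc k) =
     walk_pos (if b then m + 1 else m - 1) (if b then n + 1 else n) xs k"
  by (simp add: walk_pos_def)

lemma first_hit_L1_Nil: "first_hit_L1 l m n [] \<longleftrightarrow> m = -1"
  by (simp add: first_hit_L1_def)

lemma first_hit_L1_Cons:
  "first_hit_L1 l m n (b # xs) \<longleftrightarrow>
     m \<noteq> -1 \<and> n \<noteq> int l \<and>
     first_hit_L1 l (if b then m + 1 else m - 1) (if b then n + 1 else n) xs"
proof -
  have "(\<forall>t<Suc (length xs). P t) \<longleftrightarrow> P 0 \<and> (\<forall>t<length xs. P (Suc t))" for P
    using less_Suc_eq_0_disj by auto
  then show ?thesis
    unfolding first_hit_L1_def by (simp; blast)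
qed

lemma hit_prob_0: "hit_prob I l m n 0 = (if m = -1 then 1 else 0)"
  by (simp add: hit_prob_def first_hit_L1_Nil path_weight_def)

lemma hit_prob_Suc:
  "hit_prob I l m n (Suc T) =
     (if m \<noteq> -1 \<and> n \<noteq> int l
      then (1 - I) * hit_prob I l (m + 1) (n + 1) T + I * hit_prob I l (m - 1) n T else 0)"
proof -
  let ?S = "{xs :: bool list. length xs = T}"
  let ?g = "\<lambda>xs. if first_hit_L1 l m n xs then path_weight I xs else 0"
  have split: "{xs :: bool list. length xs = Suc T} = Cons True ` ?S \<union> Cons False ` ?S"
    by (auto simp: length_Suc_conv image_iff)
  have fin: "finite ?S"
    using finite_lists_length_eq[of "UNIV :: bool set" T] by simp
  have "hit_prob I l m n (Suc T) = sum ?g (Cons True ` ?S) + sum ?g (Cons False ` ?S)"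
    unfolding hit_prob_def split by (rule sum.union_disjoint) (use fin in auto)
  also have "\<dots> = sum (?g \<circ> Cons True) ?S + sum (?g \<circ> Cons False) ?S"
    by (simp add: sum.reindex)
  finally show ?thesis
    by (simp add: hit_prob_def first_hit_L1_Cons path_weight_def sum_distrib_left if_distrib
        cong: if_cong)
qed

lemma hit_prob_eq_0_if_late:
  assumes "-1 \<le> m" and "n \<le> int l" and "m + 1 + 2 * (int l - n) < int T"
  shows "hit_prob I l m n T = 0"
  using assms
proof (induction T arbitrary: m n)
  case 0
  then show ?case by simp
next
  case (Suc T)
  then show ?case
    by (cases "m = -1 \<or> n = int l") (auto simp: hit_prob_Suc Suc.IH)
qed

lemma Q_eq_finite_sum:
  assumes "-1 \<le> m" and "n \<le> int l" and "m + 1 + 2 * (int l - n) < int N"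
  shows "Q I l m n = (\<Sum>T<N. hit_prob I l m n T)"
  unfolding Q_def
  by (rule suminf_finite) (use assms hit_prob_eq_0_if_late in auto)

lemma Q_on_L1: "Q I l (-1) n = 1"
proof -
  have "Q I l (-1) n = (\<Sum>T<1. hit_prob I l (-1) n T)"
    unfolding Q_def
    by (rule suminf_finite) (auto simp: hit_prob_Suc dest!: gr0_implies_Suc)
  then show ?thesis
    by (simp add: hit_prob_0)
qed

lemma Q_on_L2:
  assumes "0 \<le> m"
  shows "Q I l m (int l) = 0"
proof -
  have "hit_prob I l m (int l) T = 0" for T
    using assms by (cases T) (simp_all add: hit_prob_0 hit_prob_Suc)
  then show ?thesis
    by (simp add: Q_def)
qed

lemma Q_step:
  assumes "0 \<le> m" and "n < int l"
  shows "Q I l m n = (1 - I) * Q I l (m + 1) (n + 1) + I * Q I l (m - 1) n"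
proof -
  define N where "N = nat (m + 2 * (int l - n)) + 1"
  have "Q I l m n = (\<Sum>T<Suc N. hit_prob I l m n T)"
    using assms by (intro Q_eq_finite_sum) (auto simp: N_def)
  also have "\<dots> = (\<Sum>T<N. hit_prob I l m n (Suc T))"
    using assms by (simp add: sum.lessThan_Suc_shift hit_prob_0 del: sum.lessThan_Suc)
  also have "\<dots> = (1 - I) * (\<Sum>T<N. hit_prob I l (m + 1) (n + 1) T)
                   + I * (\<Sum>T<N. hit_prob I l (m - 1) n T)"
    using assms by (simp add: hit_prob_Suc sum.distrib sum_distrib_left)
  also have "\<dots> = (1 - I) * Q I l (m + 1) (n + 1) + I * Q I l (m - 1) n"
    using assms by (subst (1 2) Q_eq_finite_sum[where N = N]) (auto simp: N_def)
  finally show ?thesis .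
qed

text \<open>\<open>a(i,m)\<close> counts the paths with \<open>i\<close> honest and \<open>m + 1 + i\<close> attacker blocks that reach
  \<open>m' = -1\<close> only at their last step; by the reflection principle this is the ballot number below.\<close>

definition ballot :: "nat \<Rightarrow> nat \<Rightarrow> real" where
  "ballot i k = real ((k + 2 * i) choose i)
                - (if i = 0 then 0 else real ((k + 2 * i) choose (i - 1)))"

lemma ballot_0_left [simp]: "ballot 0 k = 1"
  by (simp add: ballot_def)

lemma ballot_Suc_Suc: "ballot (Suc i) (Suc k) = ballot (Suc i) k + ballot i (k + 2)"
  by (cases i) (simp_all add: ballot_def)

lemma ballot_Suc_0: "ballot (Suc i) 0 = ballot i 1"
  using binomial_symmetric[of i "2 * i + 1"] by (cases i) (simp_all add: ballot_def)

lemma ballot_0_right: "ballot i 0 = catalan i"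
proof (cases i)
  case 0
  then show ?thesis by (simp add: ballot_def catalan_def)
next
  case (Suc j)
  have "Suc j * (Suc (2 * j + 1) choose Suc j) = Suc (j + 1) * (Suc (2 * j + 1) choose j)"
    using Suc_times_binomial_add[of j "j + 1"] by (simp add: mult_2)
  then have "real (Suc j) * real (Suc (2 * j + 1) choose Suc j)
               = real (Suc (j + 1)) * real (Suc (2 * j + 1) choose j)"
    by (metis of_nat_mult)
  then show ?thesis
    using Suc by (simp add: ballot_def catalan_def field_simps)
qed

lemma ballot_1_right: "ballot i 1 = catalan (Suc i)"
  using ballot_Suc_0 ballot_0_right by metis

lemma idx_tuples_0: "idx_tuples m 0 = {[]}"
  by (auto simp: idx_tuples_def)

lemma Cons_mem_idx_tuples_Suc:
  "j # js \<in> idx_tuples m (Suc k) \<longleftrightarrow> 3 \<le> j \<and> j \<le> m + 1 \<and> js \<in> idx_tuples j k"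
proof -
  have shift: "(\<forall>r. 1 \<le> r \<and> r < Suc k \<longrightarrow> P r) \<longleftrightarrow> (\<forall>r<k. P (Suc r))" for P
    by (auto simp: gr0_conv_Suc Suc_le_eq)
  have head: "(\<forall>r<k. P r) \<longleftrightarrow> (0 < k \<longrightarrow> P 0) \<and> (\<forall>r. 1 \<le> r \<and> r < k \<longrightarrow> P r)" for P
    by (auto simp: Suc_le_eq) (metis neq0_conv)
  show ?thesis
    unfolding idx_tuples_def shift by (subst head) auto
qed

lemma idx_tuples_Suc:
  "idx_tuples m (Suc k) = (\<lambda>(j, js). j # js) ` (SIGMA j:{3..m + 1}. idx_tuples j k)"
proof (rule set_eqI)
  fix js
  show "js \<in> idx_tuples m (Suc k) \<longleftrightarrow> js \<in> (\<lambda>(j, js). j # js) ` (SIGMA j:{3..m + 1}. idx_tuples j k)"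
  proof (cases js)
    case Nil
    then show ?thesis by (auto simp: idx_tuples_def)
  next
    case (Cons j js')
    then show ?thesis by (auto simp: Cons_mem_idx_tuples_Suc)
  qed
qed

lemma finite_idx_tuples: "finite (idx_tuples m k)"
  by (induction k arbitrary: m) (simp_all add: idx_tuples_0 idx_tuples_Suc)

text \<open>\<open>nested_S\<close> evaluates \<open>f\<close> at the junk value \<open>last []\<close> on the empty tuple; here the
  empty tuple contributes \<open>f m\<close>, i.e. \<open>j_0 = m\<close> as the bound \<open>j_1 \<le> m + 1\<close> suggests. Then
  \<open>a(1,m) = 1 + m\<close> is \<open>S_0(1 + j_0)\<close>, and \<open>coeff_sum\<close> describes all \<open>a(i,m)\<close> with \<open>i \<ge> 1\<close> alike.\<close>

definition nested_sum_from :: "int \<Rightarrow> nat \<Rightarrow> (int \<Rightarrow> real) \<Rightarrow> real" where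
  "nested_sum_from m k f = (\<Sum>js\<in>idx_tuples m k. f (last (m # js)))"

lemma nested_sum_from_0 [simp]: "nested_sum_from m 0 f = f m"
  by (simp add: nested_sum_from_def idx_tuples_0)

lemma nested_sum_from_Suc:
  "nested_sum_from m (Suc k) f = (\<Sum>j = 3..m + 1. nested_sum_from j k f)"
proof -
  have inj: "inj_on (\<lambda>(j, js). j # js) X" for X :: "(int \<times> int list) set"
    by (auto simp: inj_on_def)
  have "nested_sum_from m (Suc k) f
          = (\<Sum>(j, js)\<in>(SIGMA j:{3..m + 1}. idx_tuples j k). f (last (j # js)))"
    unfolding nested_sum_from_def idx_tuples_Suc sum.reindex[OF inj]
    by (simp add: case_prod_unfold)
  also have "\<dots> = (\<Sum>j = 3..m + 1. nested_sum_from j k f)"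
    unfolding nested_sum_from_def by (rule sum.Sigma[symmetric]) (auto simp: finite_idx_tuples)
  finally show ?thesis .
qed

lemma nested_sum_from_Suc_eq_0: "m \<le> 1 \<Longrightarrow> nested_sum_from m (Suc k) f = 0"
  by (simp add: nested_sum_from_Suc)

lemma nested_sum_from_Suc_telescope:
  assumes "2 \<le> m"
  shows "nested_sum_from m (Suc k) f = nested_sum_from (m - 1) (Suc k) f + nested_sum_from (m + 1) k f"
proof -
  have "{3..m + 1} = insert (m + 1) {3..m - 1 + 1}"
    using assms atLeastAtMostPlus1_int_conv[of 3 m] by (simp add: add.commute)
  then show ?thesis
    by (simp add: nested_sum_from_Suc)
qed

lemma nested_S_Suc: "nested_S m (Suc k) f = nested_sum_from m (Suc k) f"
  unfolding nested_S_def nested_sum_from_def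
  by (intro sum.cong refl) (auto simp: idx_tuples_def)

lemma nested_S_const: "nested_S m k (\<lambda>_. c) = nested_sum_from m k (\<lambda>_. c)"
  by (simp add: nested_S_def nested_sum_from_def)

definition coeff_sum :: "nat \<Rightarrow> int \<Rightarrow> real" where
  "coeff_sum i m = (\<Sum>k<i - 1. nested_sum_from m k (\<lambda>_. catalan (i + 1 - k)))
                   + nested_sum_from m (i - 1) (\<lambda>j. 1 + real_of_int j)"

lemma coeff_sum_Suc_Suc:
  "coeff_sum (Suc (Suc p)) m = catalan (p + 3)
     + (\<Sum>k<p. nested_sum_from m (Suc k) (\<lambda>_. catalan (p + 2 - k)))
     + nested_sum_from m (Suc p) (\<lambda>j. 1 + real_of_int j)"
  unfolding coeff_sum_def
  by (simp add: sum.lessThan_Suc_shift eval_nat_numeral del: sum.lessThan_Suc)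

lemma coeff_a_eq_coeff_sum:
  assumes "1 \<le> i" and "1 \<le> m"
  shows "coeff_a i m = coeff_sum i m"
proof (cases "i = 1")
  case True
  then show ?thesis by (simp add: coeff_a_def coeff_sum_def)
next
  case False
  then obtain p where p: "i = Suc (Suc p)"
    using assms(1) by (metis One_nat_def Suc_le_D nat.exhaust)
  have "(\<Sum>k=1..i-2. nested_S m k (\<lambda>_. catalan (i + 1 - k)))
          = (\<Sum>k<p. nested_sum_from m (Suc k) (\<lambda>_. catalan (p + 2 - k)))"
    by (simp add: p sum.atLeast1_atMost_eq nested_S_const)
  then show ?thesis
    using assms(2)
    by (simp add: coeff_a_def coeff_sum_Suc_Suc p nested_S_Suc nested_sum_from_Suc_eq_0
        eval_nat_numeral)
qed

lemma coeff_sum_telescope: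
  assumes "1 \<le> i" and "2 \<le> m"
  shows "coeff_sum (Suc i) m = coeff_sum (Suc i) (m - 1) + coeff_sum i (m + 1)"
proof -
  obtain p where p: "i = Suc p"
    using assms(1) by (cases i) auto
  have "coeff_sum i (m + 1) = (\<Sum>k<p. nested_sum_from (m + 1) k (\<lambda>_. catalan (p + 2 - k)))
                              + nested_sum_from (m + 1) p (\<lambda>j. 1 + real_of_int j)"
    by (simp add: coeff_sum_def p)
  then show ?thesis
    by (simp add: p coeff_sum_Suc_Suc nested_sum_from_Suc_telescope[OF assms(2)] sum.distrib)
qed

lemma coeff_sum_eq_ballot:
  assumes "1 \<le> i" and "1 \<le> k"
  shows "coeff_sum i (int k) = ballot i k"
  using assms
proof (induction i arbitrary: k rule: nat_induct_at_least)
  case base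
  then show ?case by (simp add: coeff_sum_def ballot_def)
next
  case (Suc i)
  from \<open>1 \<le> k\<close> show ?case
  proof (induction k rule: nat_induct_at_least)
    case base
    obtain p where "i = Suc p"
      using \<open>1 \<le> i\<close> by (cases i) auto
    then show ?case
      using ballot_1_right[of "Suc i"]
      by (simp add: coeff_sum_Suc_Suc nested_sum_from_Suc_eq_0 eval_nat_numeral)
  next
    case (Suc k)
    then show ?case
      using coeff_sum_telescope[of i "int (Suc k)"] \<open>1 \<le> i\<close> Suc.IH
        \<open>\<And>k. 1 \<le> k \<Longrightarrow> coeff_sum i (int k) = ballot i k\<close>[of "k + 2"]
      by (simp add: ballot_Suc_Suc add.commute)
  qed
qed

lemma coeff_a_eq_ballot: "coeff_a i (int k) = ballot i k"
proof -
  consider "i = 0" | "i = 1" | "2 \<le> i" "k = 0" | "1 \<le> i" "1 \<le> k"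
    by linarith
  then show ?thesis
  proof cases
    case 3
    then show ?thesis by (simp add: coeff_a_def ballot_0_right)
  next
    case 4
    then show ?thesis by (simp add: coeff_a_eq_coeff_sum coeff_sum_eq_ballot)
  qed (simp_all add: coeff_a_def ballot_def)
qed

definition ballot_series :: "real \<Rightarrow> nat \<Rightarrow> nat \<Rightarrow> real" where
  "ballot_series I L k = (\<Sum>i<L. ballot i k * (1 - I) ^ i * I ^ (k + 1 + i))"

lemma ballot_series_0: "ballot_series I 0 k = 0"
  by (simp add: ballot_series_def)

lemma ballot_series_Suc:
  "ballot_series I (Suc L) k
     = I ^ (k + 1) + (1 - I) * (\<Sum>i<L. ballot (Suc i) k * (1 - I) ^ i * I ^ (k + 2 + i))"
  unfolding ballot_series_def
  by (simp add: sum.lessThan_Suc_shift sum_distrib_left algebra_simps del: sum.lessThan_Suc)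

lemma ballot_series_Suc_0: "ballot_series I (Suc L) 0 = (1 - I) * ballot_series I L 1 + I"
proof -
  have "(\<Sum>i<L. ballot (Suc i) 0 * (1 - I) ^ i * I ^ (0 + 2 + i)) = ballot_series I L 1"
    by (simp add: ballot_series_def ballot_Suc_0)
  then show ?thesis
    by (simp add: ballot_series_Suc)
qed

lemma ballot_series_Suc_Suc:
  "ballot_series I (Suc L) (Suc k)
     = (1 - I) * ballot_series I L (k + 2) + I * ballot_series I (Suc L) k"
proof -
  let ?t = "\<lambda>b i. b * (1 - I) ^ i * I ^ (Suc k + 2 + i)"
  have new: "(\<Sum>i<L. ?t (ballot i (k + 2)) i) = ballot_series I L (k + 2)"
    by (simp add: ballot_series_def ac_simps)
  have old: "I ^ (Suc k + 1) + (1 - I) * (\<Sum>i<L. ?t (ballot (Suc i) k) i)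
               = I * ballot_series I (Suc L) k"
    by (simp add: ballot_series_Suc distrib_left sum_distrib_left mult_ac)
  have "ballot_series I (Suc L) (Suc k)
          = I ^ (Suc k + 1) + (1 - I) * (\<Sum>i<L. ?t (ballot (Suc i) k + ballot i (k + 2)) i)"
    by (simp only: ballot_series_Suc ballot_Suc_Suc)
  also have "\<dots> = (I ^ (Suc k + 1) + (1 - I) * (\<Sum>i<L. ?t (ballot (Suc i) k) i))
                   + (1 - I) * (\<Sum>i<L. ?t (ballot i (k + 2)) i)"
    by (simp only: distrib_right sum.distrib distrib_left add.assoc)
  finally show ?thesis
    unfolding new old by simp
qed

lemma Q_eq_ballot_series:
  assumes "n \<le> l"
  shows "Q I l (int k) (int n) = ballot_series I (l - n) k"
  using assms
proof (induction "l - n" arbitrary: n k)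
  case 0
  then show ?case by (simp add: Q_on_L2 ballot_series_0)
next
  case (Suc L)
  then have n: "int n < int l" and L: "l - n = Suc L" and L': "l - Suc n = L"
    by auto
  have next_row: "Q I l (int k + 1) (int n + 1) = ballot_series I L (Suc k)" for k
    using Suc.hyps(1)[of "Suc n" "Suc k"] L' n by (simp add: add.commute)
  show ?case
  proof (induction k)
    case 0
    then show ?case
      using Q_step[OF _ n] next_row[of 0] by (simp add: L Q_on_L1 ballot_series_Suc_0)
  next
    case (Suc k)
    then show ?case
      using Q_step[OF _ n, of "int (Suc k)"] next_row[of "Suc k"]
      by (simp add: L ballot_series_Suc_Suc add.commute)
  qed
qed

theorem theorem1:
  fixes I :: real and l :: nat and m :: int and n :: nat
  assumes "0 \<le> I" and "I < 1" and "1 \<le> l" and "-1 \<le> m" and "n \<le> l"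
  shows "(0 \<le> m \<and> n < l \<longrightarrow>
            Q I l m (int n) = (\<Sum>i<l - n. coeff_a i m * (1 - I) ^ i * I ^ (nat (m + 1) + i)))
       \<and> (m = -1 \<and> n < l \<longrightarrow> Q I l m (int n) = 1)
       \<and> (0 < m \<and> n = l \<longrightarrow> Q I l m (int n) = 0)"
proof -
  have "Q I l m (int n) = (\<Sum>i<l - n. coeff_a i m * (1 - I) ^ i * I ^ (nat (m + 1) + i))"
    if "0 \<le> m"
  proof -
    obtain k where m: "m = int k"
      using \<open>0 \<le> m\<close> nonneg_int_cases by blast
    then have "nat (m + 1) = k + 1"
      by simp
    then show ?thesis
      using Q_eq_ballot_series[OF \<open>n \<le> l\<close>, of I k]
      by (simp add: m ballot_series_def coeff_a_eq_ballot)
  qed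
  then show ?thesis
    using Q_on_L1 Q_on_L2 by auto
qed

end
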